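(* Assume the balanced case $\beta_0=C$ with $A=B=0$. Let $X(x)=\alpha_0x+\gamma_0$ and $Y=\alpha_0C$. Then for all $n\ge0$ and $0\le k\le n$, \[ P_n(x)=H_n(X(x),Y),\qquad w_{n,k}=\binom nk\alpha_0^{\,k}H_{n-k}(\gamma_0,Y). \]
   Context: Fix nonnegative integers $a,b,c,\alpha_0,\beta_0,\gamma_0$, $\alpha_k=ak+\alpha_0$, $\beta_k=bk+\beta_0$, $\gamma_k=ck+\gamma_0$; $w_{0,0}=1$, $w_{n,k}=0$ for $k<0$ or $k>n$, $w_{n+1,k}=\alpha_{k-1}w_{n,k-1}+\gamma_k w_{n,k}+\beta_k w_{n,k+1}$. $A=a$, $B=c$, $C=b$; balanced means $\beta_0=C$. $P_n(x)=\sum_k w_{n,k}x^k$. The Hermite–Kampé de Fériet polynomials $H_n(X,Y)$ are defined by $\sum_{n\ge0}H_n(X,Y)t^n/n!=\exp(Xt+\tfrac Y2t^2)$. *)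

theory Defs
  imports Complex_Main "HOL-Computational_Algebra.Formal_Power_Series"
begin

text \<open>The triangle w(n,k) with parameters a b c alpha0 beta0 gamma0 (all nonnegative
integers); k ranges over the integers and w(n,k) = 0 for k < 0 or k > n.
alpha_k = a k + alpha0, beta_k = b k + beta0, gamma_k = c k + gamma0.\<close>

fun wtri :: "nat \<Rightarrow> nat \<Rightarrow> nat \<Rightarrow> nat \<Rightarrow> nat \<Rightarrow> nat \<Rightarrow> nat \<Rightarrow> int \<Rightarrow> int" where
  "wtri a b c al0 be0 ga0 0 k = (if k = 0 then 1 else 0)"
| "wtri a b c al0 be0 ga0 (Suc n) k =
     (if k < 0 \<or> k > int (Suc n) then 0
      else (int a * (k - 1) + int al0) * wtri a b c al0 be0 ga0 n (k - 1)
         + (int c * k + int ga0) * wtri a b c al0 be0 ga0 n k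
         + (int b * k + int be0) * wtri a b c al0 be0 ga0 n (k + 1))"

definition Ppoly :: "nat \<Rightarrow> nat \<Rightarrow> nat \<Rightarrow> nat \<Rightarrow> nat \<Rightarrow> nat \<Rightarrow> nat \<Rightarrow> real \<Rightarrow> real" where
  "Ppoly a b c al0 be0 ga0 n x = (\<Sum>k=0..n. of_int (wtri a b c al0 be0 ga0 n (int k)) * x ^ k)"

definition HKdF :: "nat \<Rightarrow> real \<Rightarrow> real \<Rightarrow> real" where
  "HKdF n X Y = fact n *
     fps_nth (fps_exp 1 oo (fps_const X * fps_X + fps_const (Y / 2) * fps_X ^ 2)) n"

end

theory Submission
  imports Defs
begin

(* The exponential generating function E_X(t) = exp(X t + Y t^2/2) of H_n(X,Y) solves
   E' = E (X + Y t).  Comparing coefficients gives the three-term recurrence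
   H_(m+1) = X H_m + m Y H_(m-1), and since e^(Z t) E_X solves the same linear ODE as E_(X+Z),
   the two agree, which is the binomial addition formula
   H_n(X+Z,Y) = sum_k C(n,k) Z^k H_(n-k)(X,Y).
   For A = B = 0 and beta_0 = C the triangle recurrence reads
   w_(n+1,k) = alpha_0 w_(n,k-1) + gamma_0 w_(n,k) + C (k+1) w_(n,k+1), and Pascal's rule together
   with the three-term recurrence shows that C(n,k) alpha_0^k H_(n-k)(gamma_0, alpha_0 C) satisfies
   it.  Summing against x^k and applying the addition formula with Z = alpha_0 x gives P_n. *)

unbundle fps_syntax

lemma fps_deriv_linear_ODE_unique:
  fixes f g h :: "'a::{idom, semiring_char_0} fps"
  assumes "fps_deriv f = f * h" and "fps_deriv g = g * h" and "f $ 0 = g $ 0"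
  shows "f = g"
proof -
  define d where "d = f - g"
  have d_ODE: "fps_deriv d = d * h"
    using assms(1,2) by (simp add: d_def algebra_simps)
  have "d $ n = 0" for n
  proof (induction n rule: less_induct)
    case (less n)
    show ?case
    proof (cases n)
      case 0
      then show ?thesis using assms(3) by (simp add: d_def)
    next
      case (Suc m)
      have "of_nat (Suc m) * d $ Suc m = (d * h) $ m"
        using fps_deriv_nth[of d m] by (simp add: d_ODE)
      also have "\<dots> = 0"
        using less Suc by (simp add: fps_mult_nth)
      finally show ?thesis
        using Suc of_nat_neq_0[of m] by (simp del: of_nat_Suc)
    qed
  qed
  then show ?thesis by (simp add: d_def fps_eq_iff)
qed

definition hkdf_egf :: "real \<Rightarrow> real \<Rightarrow> real fps" where
  "hkdf_egf X Y = fps_exp 1 oo (fps_const X * fps_X + fps_const (Y / 2) * fps_X ^ 2)"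

lemma HKdF_conv_egf: "HKdF n X Y = fact n * hkdf_egf X Y $ n"
  by (simp add: HKdF_def hkdf_egf_def)

lemma hkdf_egf_nth_0 [simp]: "hkdf_egf X Y $ 0 = 1"
  by (simp add: hkdf_egf_def)

lemma fps_deriv_hkdf_egf:
  "fps_deriv (hkdf_egf X Y) = hkdf_egf X Y * (fps_const X + fps_const Y * fps_X)"
proof -
  define G where "G = fps_const X * fps_X + fps_const (Y / 2) * fps_X ^ 2"
  have "fps_deriv G = fps_const X + fps_const Y * fps_X"
    by (simp add: G_def fps_eq_iff algebra_simps)
  moreover have "G $ 0 = 0"
    by (simp add: G_def)
  ultimately show ?thesis
    by (simp add: hkdf_egf_def fps_compose_deriv flip: G_def)
qed

lemma hkdf_egf_add: "hkdf_egf (X + Z) Y = fps_exp Z * hkdf_egf X Y"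
proof (rule fps_deriv_linear_ODE_unique)
  show "fps_deriv (hkdf_egf (X + Z) Y) = hkdf_egf (X + Z) Y * (fps_const (X + Z) + fps_const Y * fps_X)"
    by (rule fps_deriv_hkdf_egf)
  show "fps_deriv (fps_exp Z * hkdf_egf X Y) = fps_exp Z * hkdf_egf X Y * (fps_const (X + Z) + fps_const Y * fps_X)"
    by (simp add: fps_deriv_hkdf_egf algebra_simps flip: fps_const_add)
qed simp

lemma HKdF_0 [simp]: "HKdF 0 X Y = 1"
  by (simp add: HKdF_conv_egf)

lemma HKdF_Suc: "HKdF (Suc m) X Y = X * HKdF m X Y + real m * Y * HKdF (m - 1) X Y"
proof -
  let ?E = "hkdf_egf X Y"
  have coeff: "real (Suc m) * ?E $ Suc m = X * ?E $ m + Y * (fps_X * ?E) $ m"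
    using arg_cong[OF fps_deriv_hkdf_egf, of "\<lambda>f. f $ m"] by (simp add: algebra_simps)
  have "HKdF (Suc m) X Y = fact m * (real (Suc m) * ?E $ Suc m)"
    by (simp add: HKdF_conv_egf)
  also have "\<dots> = X * HKdF m X Y + Y * (fact m * (fps_X * ?E) $ m)"
    unfolding coeff by (simp add: HKdF_conv_egf algebra_simps)
  also have "fact m * (fps_X * ?E) $ m = real m * HKdF (m - 1) X Y"
    by (cases m) (simp_all add: HKdF_conv_egf)
  finally show ?thesis by simp
qed

lemma HKdF_add:
  "HKdF n (X + Z) Y = (\<Sum>k\<le>n. real (n choose k) * Z ^ k * HKdF (n - k) X Y)"
proof -
  have "HKdF n (X + Z) Y = (\<Sum>k\<le>n. fact n * (Z ^ k / fact k) * hkdf_egf X Y $ (n - k))"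
    by (simp add: HKdF_conv_egf hkdf_egf_add fps_mult_nth atLeast0AtMost sum_distrib_left mult.assoc)
  also have "\<dots> = (\<Sum>k\<le>n. real (n choose k) * Z ^ k * HKdF (n - k) X Y)"
    by (intro sum.cong) (simp_all add: HKdF_conv_egf binomial_fact)
  finally show ?thesis .
qed

definition hermite_triangle :: "real \<Rightarrow> real \<Rightarrow> real \<Rightarrow> nat \<Rightarrow> nat \<Rightarrow> real" where
  "hermite_triangle \<alpha> \<beta> \<gamma> n k = real (n choose k) * \<alpha> ^ k * HKdF (n - k) \<gamma> (\<alpha> * \<beta>)"

lemma hermite_triangle_rec_0:
  "\<gamma> * hermite_triangle \<alpha> \<beta> \<gamma> n 0 + \<beta> * hermite_triangle \<alpha> \<beta> \<gamma> n 1
     = hermite_triangle \<alpha> \<beta> \<gamma> (Suc n) 0"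
  by (simp add: hermite_triangle_def HKdF_Suc algebra_simps)

lemma Suc_times_binomial_Suc: "Suc k * (n choose Suc k) = (n - k) * (n choose k)"
  by (simp only: binomial_absorption binomial_absorb_comp)

lemma hermite_triangle_rec_Suc:
  "\<alpha> * hermite_triangle \<alpha> \<beta> \<gamma> n j + \<gamma> * hermite_triangle \<alpha> \<beta> \<gamma> n (Suc j)
     + real (Suc (Suc j)) * \<beta> * hermite_triangle \<alpha> \<beta> \<gamma> n (Suc (Suc j))
   = hermite_triangle \<alpha> \<beta> \<gamma> (Suc n) (Suc j)"
proof (cases "j < n")
  case True
  define m where "m = n - Suc j"
  let ?H = "\<lambda>i. HKdF i \<gamma> (\<alpha> * \<beta>)"
  have n_minus: "Suc n - Suc j = Suc m" "n - j = Suc m" "n - Suc j = m" "n - Suc (Suc j) = m - 1"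
    using True by (simp_all add: m_def)
  have binom: "real (Suc (Suc j)) * real (n choose Suc (Suc j)) = real m * real (n choose Suc j)"
    unfolding m_def of_nat_mult [symmetric] Suc_times_binomial_Suc ..
  have "real (Suc (Suc j)) * \<beta> * hermite_triangle \<alpha> \<beta> \<gamma> n (Suc (Suc j))
      = (real (Suc (Suc j)) * real (n choose Suc (Suc j))) * (\<beta> * \<alpha> ^ Suc (Suc j) * ?H (m - 1))"
    unfolding hermite_triangle_def n_minus by (simp only: mult_ac)
  also have "\<dots> = \<alpha> ^ Suc j * real (n choose Suc j) * (real m * (\<alpha> * \<beta>) * ?H (m - 1))"
    unfolding binom by (simp add: algebra_simps)
  finally have last_term: "real (Suc (Suc j)) * \<beta> * hermite_triangle \<alpha> \<beta> \<gamma> n (Suc (Suc j))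
      = \<alpha> ^ Suc j * real (n choose Suc j) * (real m * (\<alpha> * \<beta>) * ?H (m - 1))" .
  show ?thesis
    unfolding last_term unfolding hermite_triangle_def n_minus HKdF_Suc[of m]
    by (simp add: algebra_simps)
next
  case False
  then show ?thesis
    by (simp add: hermite_triangle_def binomial_eq_0)
qed

lemma wtri_negative: "k < 0 \<Longrightarrow> wtri a b c al0 be0 ga0 n k = 0"
  by (cases n) auto

lemma wtri_balanced_eq_hermite_triangle:
  "real_of_int (wtri 0 b 0 al0 b ga0 n (int k)) = hermite_triangle (real al0) (real b) (real ga0) n k"
proof (induction n arbitrary: k)
  case 0
  then show ?case by (cases k) (simp_all add: hermite_triangle_def)
next
  case (Suc n)
  let ?w = "\<lambda>k. real_of_int (wtri 0 b 0 al0 b ga0 n k)"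
  show ?case
  proof (cases "k \<le> Suc n")
    case False
    then show ?thesis by (simp add: hermite_triangle_def)
  next
    case True
    then have w_Suc: "real_of_int (wtri 0 b 0 al0 b ga0 (Suc n) (int k))
        = real al0 * ?w (int k - 1) + real ga0 * ?w (int k) + (real b * real k + real b) * ?w (int k + 1)"
      by simp
    show ?thesis
    proof (cases k)
      case 0
      show ?thesis
        using Suc.IH[of 0] Suc.IH[of 1] hermite_triangle_rec_0[of "real ga0" "real al0" "real b" n]
        unfolding w_Suc 0 by (simp add: wtri_negative)
    next
      case (Suc j)
      have shifts: "int (Suc j) - 1 = int j" "int (Suc j) + 1 = int (Suc (Suc j))"
        by simp_all
      show ?thesis
        using hermite_triangle_rec_Suc[of "real al0" "real b" "real ga0" n j]
        unfolding w_Suc unfolding Suc shifts Suc.IH by (simp add: algebra_simps)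
    qed
  qed
qed

theorem mainTheorem10:
  fixes a b c al0 be0 ga0 n :: nat
  assumes balanced: "be0 = b"
    and A0: "a = 0" and B0: "c = 0"
  shows "(\<forall>x::real. Ppoly a b c al0 be0 ga0 n x
            = HKdF n (real al0 * x + real ga0) (real al0 * real b))
       \<and> (\<forall>k\<le>n. real_of_int (wtri a b c al0 be0 ga0 n (int k))
            = real (n choose k) * real al0 ^ k * HKdF (n - k) (real ga0) (real al0 * real b))"
proof (intro conjI allI impI)
  fix x :: real
  have "Ppoly a b c al0 be0 ga0 n x
      = (\<Sum>k\<le>n. real (n choose k) * (real al0 * x) ^ k * HKdF (n - k) (real ga0) (real al0 * real b))"
    unfolding Ppoly_def atLeast0AtMost balanced A0 B0 wtri_balanced_eq_hermite_triangle
    by (simp add: hermite_triangle_def power_mult_distrib mult_ac)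
  also have "\<dots> = HKdF n (real al0 * x + real ga0) (real al0 * real b)"
    by (simp add: HKdF_add add.commute)
  finally show "Ppoly a b c al0 be0 ga0 n x = HKdF n (real al0 * x + real ga0) (real al0 * real b)" .
next
  fix k
  show "real_of_int (wtri a b c al0 be0 ga0 n (int k))
      = real (n choose k) * real al0 ^ k * HKdF (n - k) (real ga0) (real al0 * real b)"
    using wtri_balanced_eq_hermite_triangle[of b al0 ga0 n k] by (simp add: assms hermite_triangle_def)
qed

end
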